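(* Let $k,l$ be positive integers and $G_{k,l}(T):=1-T+T^{lk+1}-T^{k(l+1)}\in\mathbb{C}[T]$. Then $G_{k,l}(T)$ is unitary if and only if $k\in\{1,2\}$.
   Context: A polynomial $f(T)\in 1+T\cdot\mathbb{C}[T]$ is called unitary if there is a unitary matrix $M$ (of some size) such that $f(T)=\det(I-MT)$; equivalently $f(T)=\prod_i(1-\alpha_iT)$ with all $|\alpha_i|=1$. *)

theory Defs
  imports "HOL-Analysis.Analysis" "HOL-Computational_Algebra.Polynomial"
begin

text \<open>A polynomial f in 1 + T C[T] is unitary iff f(T) = prod_i (1 - alpha_i T)
  with all |alpha_i| = 1 (the equivalent characterisation given in the paper).\<close>
definition unitary_poly :: "complex poly \<Rightarrow> bool" where
  "unitary_poly f \<longleftrightarrow>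
     (\<exists>as :: complex list. (\<forall>a \<in> set as. cmod a = 1) \<and>
        f = prod_list (map (\<lambda>a. [:1, - a:]) as))"

definition G_poly :: "nat \<Rightarrow> nat \<Rightarrow> complex poly" where
  "G_poly k l = 1 - [:0, 1:] + monom 1 (l * k + 1) - monom 1 (k * (l + 1))"

end

theory Submission
  imports Defs "HOL-Computational_Algebra.Fundamental_Theorem_Algebra"
begin

text \<open>A unitary polynomial f of degree d is conjugate self-reciprocal: T^d cnj(f(1/cnj T)) = c f(T)
  for a constant c \<noteq> 0, because each factor 1 - a T with |a| = 1 has this property.
  Comparing the coefficients of T and T^(d-1) rules out k \<ge> 3, where G has no T^(d-1) term.
  Conversely, a polynomial with constant term 1 all of whose roots lie on the unit circle is
  unitary, and G_(1,l) = 1 - T and G_(2,l) = (1 - T)(1 + T^(2l+1)) are of this kind.\<close>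

lemma prod_list_map_smult:
  "(\<Prod>x\<leftarrow>xs. smult (c x) (p x)) = smult (\<Prod>x\<leftarrow>xs. c x) (\<Prod>x\<leftarrow>xs. p x)"
  by (induction xs) (simp_all add: mult_ac)

lemma map_poly_cnj_mult: "map_poly cnj (p * q) = map_poly cnj p * map_poly cnj (q :: complex poly)"
  by (rule poly_eq_poly_eq_iff[THEN iffD1]) (auto simp: fun_eq_iff)

lemma map_poly_cnj_prod_list: "map_poly cnj (prod_list ps) = prod_list (map (map_poly cnj) ps)"
  by (induction ps) (simp_all add: map_poly_cnj_mult)

lemma conj_reflect_unit_linear_factor:
  assumes "cmod a = 1"
  shows "map_poly cnj (reflect_poly [:1, - a:]) = smult (- cnj a) [:1, - a:]"
proof -
  have "cnj a * a = 1"
    using assms by (metis complex_norm_square mult.commute of_real_1 power_one)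
  moreover have "a \<noteq> 0"
    using assms by auto
  ultimately show ?thesis
    by (simp add: reflect_poly_def cCons_def map_poly_pCons)
qed

lemma unitary_poly_conj_reflect:
  assumes "unitary_poly f"
  obtains c where "c \<noteq> 0" "map_poly cnj (reflect_poly f) = smult c f"
proof -
  obtain as where unit: "\<forall>a\<in>set as. cmod a = 1" and f: "f = (\<Prod>a\<leftarrow>as. [:1, - a:])"
    using assms unfolding unitary_poly_def by blast
  have "map_poly cnj (reflect_poly f) = (\<Prod>a\<leftarrow>as. smult (- cnj a) [:1, - a:])"
    unfolding f reflect_poly_prod_list map_poly_cnj_prod_list map_map o_def
    using unit
    by (intro arg_cong[where f = prod_list] map_cong) (auto simp: conj_reflect_unit_linear_factor)
  also have "\<dots> = smult (\<Prod>a\<leftarrow>as. - cnj a) f"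
    by (simp only: prod_list_map_smult f)
  finally show ?thesis
    using unit by (intro that[of "\<Prod>a\<leftarrow>as. - cnj a"]) (auto simp: prod_list_zero_iff)
qed

lemma unitary_poly_coeff_pred_degree_eq_0_iff:
  assumes "unitary_poly f" and "degree f \<ge> 1"
  shows "coeff f (degree f - 1) = 0 \<longleftrightarrow> coeff f 1 = 0"
proof -
  obtain c where "c \<noteq> 0" and c: "map_poly cnj (reflect_poly f) = smult c f"
    using assms(1) by (rule unitary_poly_conj_reflect)
  have "cnj (coeff f (degree f - 1)) = coeff (map_poly cnj (reflect_poly f)) 1"
    using assms(2) by (simp add: coeff_map_poly coeff_reflect_poly)
  also have "\<dots> = c * coeff f 1"
    by (simp add: c)
  finally show ?thesis
    using \<open>c \<noteq> 0\<close> by (metis complex_cnj_zero_iff mult_eq_0_iff)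
qed

lemma unitary_polyI:
  assumes "poly p 0 = 1" and unit_roots: "\<And>z. poly p z = 0 \<Longrightarrow> cmod z = 1"
  shows "unitary_poly p"
proof -
  obtain rs where rs: "mset rs = proots p"
    using ex_mset by blast
  have "p \<noteq> 0"
    using assms(1) by auto
  then have unit: "cmod r = 1" if "r \<in> set rs" for r
    using that unit_roots by (metis rs set_mset_mset set_count_proots mem_Collect_eq)
  have "p = smult (lead_coeff p) (\<Prod>r\<leftarrow>rs. [:- r, 1:])"
    using complex_poly_decompose_multiset[of p]
    by (metis prod_mset_prod_list mset_map rs)
  also have "(\<Prod>r\<leftarrow>rs. [:- r, 1:]) = (\<Prod>r\<leftarrow>rs. smult (- r) [:1, - cnj r:])"
  proof (intro arg_cong[where f = prod_list] map_cong refl)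
    fix r assume "r \<in> set rs"
    then have "r * cnj r = 1"
      using unit by (metis complex_norm_square of_real_1 power_one)
    then show "[:- r, 1:] = smult (- r) [:1, - cnj r:]"
      by simp
  qed
  finally have p: "p = smult (lead_coeff p * (\<Prod>r\<leftarrow>rs. - r)) (\<Prod>a\<leftarrow>map cnj rs. [:1, - a:])"
    by (simp only: prod_list_map_smult smult_smult map_map o_def)
  moreover have "lead_coeff p * (\<Prod>r\<leftarrow>rs. - r) = 1"
    using assms(1) by (subst (asm) p)
      (simp add: poly_0_coeff_0 coeff_0_prod_list o_def map_replicate_const)
  ultimately show ?thesis
    unfolding unitary_poly_def using unit by (intro exI[of _ "map cnj rs"]) auto
qed

lemma coeff_G_poly:
  "coeff (G_poly k l) j =
     (if j = 0 then 1 else 0) - (if j = 1 then 1 else 0)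
     + (if j = l * k + 1 then 1 else 0) - (if j = k * (l + 1) then 1 else 0)"
  by (simp add: G_poly_def coeff_monom coeff_pCons split: nat.split)

lemma poly_G_poly: "poly (G_poly k l) z = 1 - z + z ^ (l * k + 1) - z ^ (k * (l + 1))"
  by (simp add: G_poly_def poly_monom)

lemma degree_G_poly:
  assumes "k \<ge> 2"
  shows "degree (G_poly k l) = k * (l + 1)"
proof (rule antisym)
  show "degree (G_poly k l) \<le> k * (l + 1)"
    by (rule degree_le) (auto simp: coeff_G_poly)
  show "k * (l + 1) \<le> degree (G_poly k l)"
    using assms by (intro le_degree) (auto simp: coeff_G_poly algebra_simps)
qed

lemma G_poly_not_unitary:
  assumes "k \<ge> 3" and "l > 0"
  shows "\<not> unitary_poly (G_poly k l)"
proof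
  assume unitary: "unitary_poly (G_poly k l)"
  have deg: "degree (G_poly k l) = l * k + k"
    using assms by (simp add: degree_G_poly algebra_simps)
  have "coeff (G_poly k l) (degree (G_poly k l) - 1) = 0"
    using assms unfolding deg coeff_G_poly by (auto simp: algebra_simps)
  moreover have "coeff (G_poly k l) 1 \<noteq> 0"
    using assms by (simp add: coeff_G_poly)
  ultimately show False
    using unitary_poly_coeff_pred_degree_eq_0_iff[OF unitary] deg assms by simp
qed

lemma unitary_G_poly_1: "unitary_poly (G_poly 1 l)"
proof (rule unitary_polyI)
  show "poly (G_poly 1 l) 0 = 1"
    by (simp add: poly_G_poly)
  show "cmod z = 1" if "poly (G_poly 1 l) z = 0" for z
    using that by (simp add: poly_G_poly)
qed

lemma unitary_G_poly_2: "unitary_poly (G_poly 2 l)"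
proof (rule unitary_polyI)
  show "poly (G_poly 2 l) 0 = 1"
    by (simp add: poly_G_poly)
  fix z :: complex
  assume "poly (G_poly 2 l) z = 0"
  moreover have "poly (G_poly 2 l) z = (1 - z) * (1 + z ^ (2 * l + 1))"
    by (simp add: poly_G_poly algebra_simps)
  ultimately consider "z = 1" | "z ^ (2 * l + 1) = - 1"
    by (metis add_eq_0_iff eq_iff_diff_eq_0 mult_eq_0_iff)
  then show "cmod z = 1"
  proof cases
    case 2
    then have "cmod z ^ (2 * l + 1) = 1"
      by (metis norm_minus_cancel norm_one norm_power)
    then show ?thesis
      using power_eq_imp_eq_base[of "cmod z" "2 * l + 1" 1] by simp
  qed simp
qed

theorem proposition13:
  fixes k l :: nat
  assumes "k > 0" and "l > 0"
  shows "unitary_poly (G_poly k l) \<longleftrightarrow> k \<in> {1, 2}"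
proof
  assume "unitary_poly (G_poly k l)"
  then show "k \<in> {1, 2}"
    using G_poly_not_unitary[of k l] assms by (cases "k \<ge> 3") auto
next
  assume "k \<in> {1, 2}"
  then show "unitary_poly (G_poly k l)"
    using unitary_G_poly_1 unitary_G_poly_2 by auto
qed

end
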